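(* Let $m,g>0$ and $\epsilon\geq 0$. Consider the planar taut-cable tethered UAV model described in the context, and let $\mathcal{S}_\epsilon$ denote its set of attainable equilibria with safety margin $\epsilon$. Then $\mathcal{S}_\epsilon$ consists exactly of the triples $(\bar r,\bar\alpha,\bar\theta)$ satisfying $\bar r>0$, $\bar\alpha\in[0,\pi]$ and \[ \begin{cases} \bar\theta\in\left(\bar\theta_\epsilon(\bar\alpha),\ \frac{\pi}{2}-\bar\alpha\right) & \text{if } \bar\alpha\in\left[0,\frac{\pi}{2}\right),\\ \bar\theta=0 & \text{if } \bar\alpha=\frac{\pi}{2},\\ \bar\theta\in\left(\frac{\pi}{2}-\bar\alpha,\ \bar\theta_\epsilon(\bar\alpha)\right) & \text{if } \bar\alpha\in\left(\frac{\pi}{2},\pi\right], \end{cases} \] where \[ \bar\theta_\epsilon(\bar\alpha)=\begin{cases}\arctan\left(\frac{\epsilon}{mg\cos\bar\alpha}+\tan\bar\alpha\right)-\bar\alpha & \text{if } \bar\alpha\in\left[0,\frac{\pi}{2}\right),\\[2pt] \arctan\left(\frac{\epsilon}{mg\cos\bar\alpha}+\tan\bar\alpha\right)+\pi-\bar\alpha & \text{if } \bar\alpha\in\left(\frac{\pi}{2},\pi\right],\end{cases} \] with $\arctan$ the principal branch with values in $(-\pi/2,\pi/2)$. Moreover, the cable tension at equilibrium is $\bar T=mg\left(\tan(\bar\alpha+\bar\theta)\cos\bar\alpha-\sin\bar\alpha\right)$ if $\bar\alpha\in[0,\pi]\setminus\{\pi/2\}$, while if $\bar\alpha=\pi/2$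 the equilibrium tension can be any value in $\mathbb{R}_{>0}$ (depending on the constant thrust).
   Context: Model: a planar UAV of mass $m>0$ and moment of inertia $\mathcal{J}>0$, subject to gravity $g>0$, is connected to the ground by a taut cable wound on a winch of radius $\rho>0$ and moment of inertia $\mathcal{I}>0$. Its polar coordinates are the radial position $r>0$ and elevation angle $\alpha\in[0,\pi]$; its pitch angle is $\theta\in(-\pi,\pi]$. Inputs are total thrust $u_1\geq 0$, torque $u_2\in\mathbb{R}$ and winch torque $u_3\in\mathbb{R}$. The taut-cable dynamics are \[ \ddot r=\tfrac{\rho}{\mathcal I}u_3+\tfrac{\rho^2}{\mathcal I}T,\quad \ddot\alpha=-\tfrac{1}{r}\left(2\dot r\dot\alpha+g\cos\alpha\right)+\tfrac{1}{mr}u_1\cos(\alpha+\theta),\quad \ddot\theta=\tfrac{1}{\mathcal J}u_2, \] where the cable tension is $T=mr\dot\alpha^2-mg\sin\alpha+u_1\sin(\alpha+\theta)-m\ddot r$. A triple $(\bar r,\bar\alpha,\bar\theta)$ with $\bar r>0$, $\bar\alpha\in[0,\pi]$, $\bar\theta\in(-\pi,\pi]$ is an equilibrium if there are constant inputs $\bar u_1\geq0,\bar u_2,\bar u_3$ for which the constant trajectory $(r,\alpha,\theta)\equiv(\bar r,\bar\alpha,\bar\theta)$ solves the dynamics; the corresponding equilibrium tension is $\bar T=\bar u_1\sin(\bar\alpha+\bar\theta)-mg\sin\bar\alpha$. Given $\epsilon\geq 0$, the set of attainable equilibria $\mathcal{S}_\epsilon$ is the set of equilibria $(\bar r,\bar\alpha,\bar\theta)$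 admitting such constant inputs with $\bar T>\epsilon$. *)

theory Defs
  imports Complex_Main
begin

definition tension :: "real \<Rightarrow> real \<Rightarrow> real \<Rightarrow> real \<Rightarrow> real \<Rightarrow> real \<Rightarrow> real \<Rightarrow> real \<Rightarrow> real" where
  "tension m g r dalpha alpha theta u1 ddr =
     m * r * dalpha\<^sup>2 - m * g * sin alpha + u1 * sin (alpha + theta) - m * ddr"

definition dynamics ::
  "real \<Rightarrow> real \<Rightarrow> real \<Rightarrow> real \<Rightarrow> real \<Rightarrow>
   real \<Rightarrow> real \<Rightarrow> real \<Rightarrow> real \<Rightarrow> real \<Rightarrow> real \<Rightarrow> real \<Rightarrow>
   real \<Rightarrow> real \<Rightarrow> real \<Rightarrow> real \<Rightarrow> bool" where
  "dynamics m g \<rho> I J r dr ddr alpha dalpha ddalpha theta ddtheta u1 u2 u3 \<longleftrightarrow>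
     ddr = \<rho> / I * u3 + \<rho>\<^sup>2 / I * tension m g r dalpha alpha theta u1 ddr \<and>
     ddalpha = - (1 / r) * (2 * dr * dalpha + g * cos alpha) + 1 / (m * r) * u1 * cos (alpha + theta) \<and>
     ddtheta = 1 / J * u2"

definition equilibrium_inputs ::
  "real \<Rightarrow> real \<Rightarrow> real \<Rightarrow> real \<Rightarrow> real \<Rightarrow> real \<Rightarrow> real \<Rightarrow> real \<Rightarrow>
   real \<Rightarrow> real \<Rightarrow> real \<Rightarrow> bool" where
  "equilibrium_inputs m g \<rho> I J r alpha theta u1 u2 u3 \<longleftrightarrow>
     u1 \<ge> 0 \<and> dynamics m g \<rho> I J r 0 0 alpha 0 0 theta 0 u1 u2 u3"

definition eq_tension :: "real \<Rightarrow> real \<Rightarrow> real \<Rightarrow> real \<Rightarrow> real \<Rightarrow> real" where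
  "eq_tension m g alpha theta u1 = u1 * sin (alpha + theta) - m * g * sin alpha"

definition attainable_equilibria ::
  "real \<Rightarrow> real \<Rightarrow> real \<Rightarrow> real \<Rightarrow> real \<Rightarrow> real \<Rightarrow> (real \<times> real \<times> real) set" where
  "attainable_equilibria m g \<rho> I J \<epsilon> =
     {(r, alpha, theta). r > 0 \<and> alpha \<in> {0..pi} \<and> theta \<in> {-pi<..pi} \<and>
        (\<exists>u1 u2 u3. equilibrium_inputs m g \<rho> I J r alpha theta u1 u2 u3 \<and>
                    eq_tension m g alpha theta u1 > \<epsilon>)}"

text \<open>The boundary angle theta_eps(alpha) (only meaningful for alpha \<noteq> pi/2).\<close>
definition theta_eps :: "real \<Rightarrow> real \<Rightarrow> real \<Rightarrow> real \<Rightarrow> real" where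
  "theta_eps m g \<epsilon> alpha =
     (if alpha < pi / 2
      then arctan (\<epsilon> / (m * g * cos alpha) + tan alpha) - alpha
      else arctan (\<epsilon> / (m * g * cos alpha) + tan alpha) + pi - alpha)"

end

theory Submission
  imports Defs
begin

text \<open>At an equilibrium the winch torque u3 = -\<rho> T and the pitch torque u2 = 0 are forced,
  so everything reduces to the elevation balance u1 cos(\<alpha> + \<theta>) = m g cos \<alpha>
  with u1 \<ge> 0. For cos \<alpha> \<noteq> 0 this determines u1, hence T = m g cos \<alpha> (tan(\<alpha>+\<theta>) - tan \<alpha>),
  and u1 \<ge> 0 forces cos(\<alpha>+\<theta>) to have the sign of cos \<alpha>. On the branch of \<alpha> + \<theta>
  (resp. \<alpha> + \<theta> - \<pi>) where tan is invertible, T > \<epsilon> becomes a bound on \<theta> via arctan.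
  For \<alpha> = \<pi>/2 the balance forces sin \<theta> = 0, and any thrust above m g gives a positive
  tension.\<close>

lemma tan_times_cos_diff_sin:
  fixes x \<alpha> :: real
  assumes "cos \<alpha> \<noteq> 0"
  shows "tan x * cos \<alpha> - sin \<alpha> = (tan x - tan \<alpha>) * cos \<alpha>"
  using assms by (simp add: tan_def algebra_simps)

lemma cos_gt_zero_iff:
  fixes x :: real
  assumes "- (3 * pi / 2) \<le> x" "x \<le> 3 * pi / 2"
  shows "0 < cos x \<longleftrightarrow> \<bar>x\<bar> < pi / 2"
proof
  assume "0 < cos x"
  show "\<bar>x\<bar> < pi / 2"
  proof (rule ccontr)
    assume "\<not> \<bar>x\<bar> < pi / 2"
    then consider "x \<le> - (pi / 2)" | "pi / 2 \<le> x" by linarith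
    then show False
    proof cases
      case 1
      then have "0 \<le> cos (x + pi)" using assms by (intro cos_ge_zero) auto
      then show False using \<open>0 < cos x\<close> by simp
    next
      case 2
      then have "0 \<le> cos (x - pi)" using assms by (intro cos_ge_zero) auto
      then show False using \<open>0 < cos x\<close> by simp
    qed
  qed
qed (intro cos_gt_zero_pi; linarith)

lemma cos_lt_zero_iff:
  fixes x :: real
  assumes "- (pi / 2) \<le> x" "x \<le> 5 * pi / 2"
  shows "cos x < 0 \<longleftrightarrow> \<bar>x - pi\<bar> < pi / 2"
  using cos_gt_zero_iff[of "x - pi"] assms by simp

lemma arctan_less_iff_less_tan:
  fixes s :: real
  assumes "\<bar>s\<bar> < pi / 2"
  shows "arctan y < s \<longleftrightarrow> y < tan s"
  using arctan_less_iff[of y "tan s"] arctan_tan[of s] assms by simp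

lemma less_arctan_iff_tan_less:
  fixes s :: real
  assumes "\<bar>s\<bar> < pi / 2"
  shows "s < arctan y \<longleftrightarrow> tan s < y"
  using arctan_less_iff[of "tan s" y] arctan_tan[of s] assms by simp

lemma equilibrium_inputs_iff:
  assumes "m > 0" "\<rho> > 0" "I > 0" "J > 0" "r > 0"
  shows "equilibrium_inputs m g \<rho> I J r \<alpha> \<theta> u1 u2 u3 \<longleftrightarrow>
     u1 \<ge> 0 \<and> u1 * cos (\<alpha> + \<theta>) = m * g * cos \<alpha> \<and> u2 = 0 \<and> u3 = - \<rho> * eq_tension m g \<alpha> \<theta> u1"
proof -
  have "\<rho> / I * u3 + \<rho>\<^sup>2 / I * eq_tension m g \<alpha> \<theta> u1 = \<rho> / I * (u3 + \<rho> * eq_tension m g \<alpha> \<theta> u1)"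
    by (simp add: power2_eq_square algebra_simps)
  then have winch: "0 = \<rho> / I * u3 + \<rho>\<^sup>2 / I * eq_tension m g \<alpha> \<theta> u1 \<longleftrightarrow>
      u3 = - \<rho> * eq_tension m g \<alpha> \<theta> u1"
    using assms by auto
  have elevation: "0 = - (1 / r) * (2 * 0 * 0 + g * cos \<alpha>) + 1 / (m * r) * u1 * cos (\<alpha> + \<theta>) \<longleftrightarrow>
      u1 * cos (\<alpha> + \<theta>) = m * g * cos \<alpha>"
    using assms by (auto simp: field_simps)
  have "tension m g r 0 \<alpha> \<theta> u1 0 = eq_tension m g \<alpha> \<theta> u1"
    by (simp add: tension_def eq_tension_def)
  then show ?thesis
    unfolding equilibrium_inputs_def dynamics_def using winch elevation assms(4) by auto
qed

lemma eq_tension_balanced: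
  assumes "m * g \<noteq> 0" "cos \<alpha> \<noteq> 0" and balance: "u1 * cos (\<alpha> + \<theta>) = m * g * cos \<alpha>"
  shows "eq_tension m g \<alpha> \<theta> u1 = m * g * (tan (\<alpha> + \<theta>) * cos \<alpha> - sin \<alpha>)"
proof -
  have "cos (\<alpha> + \<theta>) \<noteq> 0" using assms by auto
  then have "u1 = m * g * cos \<alpha> / cos (\<alpha> + \<theta>)" using balance by (simp add: field_simps)
  then show ?thesis unfolding eq_tension_def tan_def by (simp add: algebra_simps)
qed

definition tension_attainable :: "real \<Rightarrow> real \<Rightarrow> real \<Rightarrow> real \<Rightarrow> real \<Rightarrow> bool" where
  "tension_attainable m g \<epsilon> \<alpha> \<theta> \<longleftrightarrow>
     (\<exists>u1\<ge>0. u1 * cos (\<alpha> + \<theta>) = m * g * cos \<alpha> \<and> eq_tension m g \<alpha> \<theta> u1 > \<epsilon>)"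

lemma attainable_equilibria_iff:
  assumes "m > 0" "\<rho> > 0" "I > 0" "J > 0"
  shows "(r, \<alpha>, \<theta>) \<in> attainable_equilibria m g \<rho> I J \<epsilon> \<longleftrightarrow>
     r > 0 \<and> \<alpha> \<in> {0..pi} \<and> \<theta> \<in> {-pi<..pi} \<and> tension_attainable m g \<epsilon> \<alpha> \<theta>"
proof (cases "r > 0")
  case True
  have "(\<exists>u1 u2 u3. equilibrium_inputs m g \<rho> I J r \<alpha> \<theta> u1 u2 u3 \<and> eq_tension m g \<alpha> \<theta> u1 > \<epsilon>)
      \<longleftrightarrow> tension_attainable m g \<epsilon> \<alpha> \<theta>"
    using equilibrium_inputs_iff[OF assms True] unfolding tension_attainable_def by auto
  then show ?thesis using True unfolding attainable_equilibria_def by auto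
qed (simp add: attainable_equilibria_def)

lemma tension_attainable_iff:
  assumes "m * g > 0" "cos \<alpha> \<noteq> 0"
  shows "tension_attainable m g \<epsilon> \<alpha> \<theta> \<longleftrightarrow>
     cos \<alpha> * cos (\<alpha> + \<theta>) > 0 \<and> \<epsilon> < m * g * (tan (\<alpha> + \<theta>) * cos \<alpha> - sin \<alpha>)"
proof
  assume "tension_attainable m g \<epsilon> \<alpha> \<theta>"
  then obtain u1 where u1: "u1 \<ge> 0" "u1 * cos (\<alpha> + \<theta>) = m * g * cos \<alpha>" "eq_tension m g \<alpha> \<theta> u1 > \<epsilon>"
    unfolding tension_attainable_def by blast
  have "m * g * (cos \<alpha> * cos (\<alpha> + \<theta>)) = u1 * (cos (\<alpha> + \<theta>))\<^sup>2"
    using u1(2) by (simp add: power2_eq_square algebra_simps)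
  moreover have "u1 * (cos (\<alpha> + \<theta>))\<^sup>2 > 0"
    using u1(1,2) assms by (auto simp: less_le)
  ultimately have "cos \<alpha> * cos (\<alpha> + \<theta>) > 0"
    using assms(1) by (metis zero_less_mult_pos)
  then show "cos \<alpha> * cos (\<alpha> + \<theta>) > 0 \<and> \<epsilon> < m * g * (tan (\<alpha> + \<theta>) * cos \<alpha> - sin \<alpha>)"
    using u1(3) eq_tension_balanced[OF dual_order.strict_implies_not_eq[OF assms(1)] assms(2) u1(2)] by simp
next
  assume feasible: "cos \<alpha> * cos (\<alpha> + \<theta>) > 0 \<and> \<epsilon> < m * g * (tan (\<alpha> + \<theta>) * cos \<alpha> - sin \<alpha>)"
  define u1 where "u1 = m * g * cos \<alpha> / cos (\<alpha> + \<theta>)"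
  have "cos \<alpha> / cos (\<alpha> + \<theta>) > 0"
    using feasible by (simp add: zero_less_divide_iff zero_less_mult_iff)
  then have "u1 \<ge> 0"
    using assms(1) unfolding u1_def by (metis less_eq_real_def mult_pos_pos times_divide_eq_right)
  moreover have balance: "u1 * cos (\<alpha> + \<theta>) = m * g * cos \<alpha>"
    using feasible unfolding u1_def by auto
  ultimately show "tension_attainable m g \<epsilon> \<alpha> \<theta>"
    unfolding tension_attainable_def
    using feasible eq_tension_balanced[OF dual_order.strict_implies_not_eq[OF assms(1)] assms(2) balance]
    by auto
qed

lemma tension_margin_cos_pos:
  fixes m g \<epsilon> \<alpha> \<theta> :: real
  assumes "m * g > 0" "cos \<alpha> > 0"
  shows "\<epsilon> < m * g * (tan (\<alpha> + \<theta>) * cos \<alpha> - sin \<alpha>) \<longleftrightarrow>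
     \<epsilon> / (m * g * cos \<alpha>) + tan \<alpha> < tan (\<alpha> + \<theta>)"
proof -
  have "m * g * (tan (\<alpha> + \<theta>) * cos \<alpha> - sin \<alpha>) = (tan (\<alpha> + \<theta>) - tan \<alpha>) * (m * g * cos \<alpha>)"
    using tan_times_cos_diff_sin[OF dual_order.strict_implies_not_eq[OF assms(2)]] by simp
  moreover have "\<epsilon> / (m * g * cos \<alpha>) < tan (\<alpha> + \<theta>) - tan \<alpha> \<longleftrightarrow>
      \<epsilon> < (tan (\<alpha> + \<theta>) - tan \<alpha>) * (m * g * cos \<alpha>)"
    using assms by (intro pos_divide_less_eq) simp
  ultimately show ?thesis by linarith
qed

lemma tension_margin_cos_neg:
  fixes m g \<epsilon> \<alpha> \<theta> :: real
  assumes "m * g > 0" "cos \<alpha> < 0"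
  shows "\<epsilon> < m * g * (tan (\<alpha> + \<theta>) * cos \<alpha> - sin \<alpha>) \<longleftrightarrow>
     tan (\<alpha> + \<theta>) < \<epsilon> / (m * g * cos \<alpha>) + tan \<alpha>"
proof -
  have "m * g * (tan (\<alpha> + \<theta>) * cos \<alpha> - sin \<alpha>) = (tan (\<alpha> + \<theta>) - tan \<alpha>) * (m * g * cos \<alpha>)"
    using tan_times_cos_diff_sin[OF less_imp_neq[OF assms(2)]] by simp
  moreover have "tan (\<alpha> + \<theta>) - tan \<alpha> < \<epsilon> / (m * g * cos \<alpha>) \<longleftrightarrow>
      \<epsilon> < (tan (\<alpha> + \<theta>) - tan \<alpha>) * (m * g * cos \<alpha>)"
    using assms by (intro neg_less_divide_eq) (simp add: mult_pos_neg)
  ultimately show ?thesis by linarith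
qed

lemma attainable_pitch_low_elevation:
  fixes m g \<epsilon> \<alpha> \<theta> :: real
  assumes "m > 0" "g > 0" "0 \<le> \<alpha>" "\<alpha> < pi / 2"
  shows "\<theta> \<in> {-pi<..pi} \<and> tension_attainable m g \<epsilon> \<alpha> \<theta> \<longleftrightarrow>
     theta_eps m g \<epsilon> \<alpha> < \<theta> \<and> \<theta> < pi / 2 - \<alpha>"
proof -
  define K where "K = \<epsilon> / (m * g * cos \<alpha>) + tan \<alpha>"
  have mg: "m * g > 0" using assms by simp
  have cos_\<alpha>: "cos \<alpha> > 0" using assms by (intro cos_gt_zero_pi) auto
  have window: "\<theta> \<in> {-pi<..pi} \<and> cos (\<alpha> + \<theta>) > 0 \<longleftrightarrow> \<bar>\<alpha> + \<theta>\<bar> < pi / 2"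
  proof
    assume "\<theta> \<in> {-pi<..pi} \<and> cos (\<alpha> + \<theta>) > 0"
    then show "\<bar>\<alpha> + \<theta>\<bar> < pi / 2" using cos_gt_zero_iff[of "\<alpha> + \<theta>"] assms by auto
  next
    assume "\<bar>\<alpha> + \<theta>\<bar> < pi / 2"
    then have "- (pi / 2) < \<alpha> + \<theta>" "\<alpha> + \<theta> < pi / 2" by arith+
    then show "\<theta> \<in> {-pi<..pi} \<and> cos (\<alpha> + \<theta>) > 0"
      using cos_gt_zero_pi[of "\<alpha> + \<theta>"] assms by auto
  qed
  have "\<theta> \<in> {-pi<..pi} \<and> tension_attainable m g \<epsilon> \<alpha> \<theta> \<longleftrightarrow>
      \<theta> \<in> {-pi<..pi} \<and> cos (\<alpha> + \<theta>) > 0 \<and> K < tan (\<alpha> + \<theta>)"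
    unfolding K_def tension_attainable_iff[OF mg cos_\<alpha>[THEN dual_order.strict_implies_not_eq]]
      tension_margin_cos_pos[OF mg cos_\<alpha>, symmetric]
    using cos_\<alpha> by (simp add: zero_less_mult_iff)
  also have "\<dots> \<longleftrightarrow> \<bar>\<alpha> + \<theta>\<bar> < pi / 2 \<and> arctan K < \<alpha> + \<theta>"
    using window arctan_less_iff_less_tan[of "\<alpha> + \<theta>" K] by blast
  also have "\<dots> \<longleftrightarrow> arctan K - \<alpha> < \<theta> \<and> \<theta> < pi / 2 - \<alpha>"
    using arctan_bounded[of K] by arith
  also have "arctan K - \<alpha> = theta_eps m g \<epsilon> \<alpha>"
    using assms unfolding theta_eps_def K_def by simp
  finally show ?thesis .
qed

lemma attainable_pitch_high_elevation:
  fixes m g \<epsilon> \<alpha> \<theta> :: real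
  assumes "m > 0" "g > 0" "pi / 2 < \<alpha>" "\<alpha> \<le> pi"
  shows "\<theta> \<in> {-pi<..pi} \<and> tension_attainable m g \<epsilon> \<alpha> \<theta> \<longleftrightarrow>
     pi / 2 - \<alpha> < \<theta> \<and> \<theta> < theta_eps m g \<epsilon> \<alpha>"
proof -
  define K where "K = \<epsilon> / (m * g * cos \<alpha>) + tan \<alpha>"
  have mg: "m * g > 0" using assms by simp
  have cos_\<alpha>: "cos \<alpha> < 0" using cos_lt_zero_iff[of \<alpha>] assms by simp
  have window: "\<theta> \<in> {-pi<..pi} \<and> cos (\<alpha> + \<theta>) < 0 \<longleftrightarrow> \<bar>\<alpha> + \<theta> - pi\<bar> < pi / 2"
  proof
    assume "\<theta> \<in> {-pi<..pi} \<and> cos (\<alpha> + \<theta>) < 0"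
    then show "\<bar>\<alpha> + \<theta> - pi\<bar> < pi / 2" using cos_lt_zero_iff[of "\<alpha> + \<theta>"] assms by auto
  next
    assume close: "\<bar>\<alpha> + \<theta> - pi\<bar> < pi / 2"
    then have "pi / 2 < \<alpha> + \<theta>" "\<alpha> + \<theta> < 3 * pi / 2" by arith+
    then show "\<theta> \<in> {-pi<..pi} \<and> cos (\<alpha> + \<theta>) < 0"
      using close cos_lt_zero_iff[of "\<alpha> + \<theta>"] assms by auto
  qed
  have tan_shift: "tan (\<alpha> + \<theta> - pi) = tan (\<alpha> + \<theta>)"
    using tan_periodic_pi[of "\<alpha> + \<theta> - pi"] by simp
  have "\<theta> \<in> {-pi<..pi} \<and> tension_attainable m g \<epsilon> \<alpha> \<theta> \<longleftrightarrow>
      \<theta> \<in> {-pi<..pi} \<and> cos (\<alpha> + \<theta>) < 0 \<and> tan (\<alpha> + \<theta> - pi) < K"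
    unfolding K_def tan_shift tension_attainable_iff[OF mg cos_\<alpha>[THEN less_imp_neq]]
      tension_margin_cos_neg[OF mg cos_\<alpha>, symmetric]
    using cos_\<alpha> by (simp add: zero_less_mult_iff)
  also have "\<dots> \<longleftrightarrow> \<bar>\<alpha> + \<theta> - pi\<bar> < pi / 2 \<and> \<alpha> + \<theta> - pi < arctan K"
    using window less_arctan_iff_tan_less[of "\<alpha> + \<theta> - pi" K] by blast
  also have "\<dots> \<longleftrightarrow> pi / 2 - \<alpha> < \<theta> \<and> \<theta> < arctan K + pi - \<alpha>"
    using arctan_bounded[of K] by arith
  also have "arctan K + pi - \<alpha> = theta_eps m g \<epsilon> \<alpha>"
    using assms unfolding theta_eps_def K_def by simp
  finally show ?thesis .
qed

lemma attainable_pitch_vertical: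
  fixes m g \<epsilon> \<theta> :: real
  assumes "m * g > 0" "\<epsilon> \<ge> 0"
  shows "\<theta> \<in> {-pi<..pi} \<and> tension_attainable m g \<epsilon> (pi / 2) \<theta> \<longleftrightarrow> \<theta> = 0"
proof
  assume attainable: "\<theta> \<in> {-pi<..pi} \<and> tension_attainable m g \<epsilon> (pi / 2) \<theta>"
  then obtain u1 where "u1 \<ge> 0" "u1 * sin \<theta> = 0" "u1 * cos \<theta> - m * g > \<epsilon>"
    unfolding tension_attainable_def eq_tension_def by (auto simp: cos_add sin_add)
  moreover have "u1 * cos \<theta> > 0" using calculation assms by linarith
  ultimately have "sin \<theta> = 0" "cos \<theta> > 0" by (auto simp: zero_less_mult_iff)
  then show "\<theta> = 0"
    using attainable sin_zero_pi_iff[of \<theta>] by (cases "\<theta> = pi") auto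
next
  assume "\<theta> = 0"
  then show "\<theta> \<in> {-pi<..pi} \<and> tension_attainable m g \<epsilon> (pi / 2) \<theta>"
    unfolding tension_attainable_def eq_tension_def using assms
    by (auto intro!: exI[of _ "m * g + \<epsilon> + 1"])
qed

lemma attainable_equilibria_eq:
  fixes m g \<rho> I J \<epsilon> :: real
  assumes "m > 0" "g > 0" "\<rho> > 0" "I > 0" "J > 0" "\<epsilon> \<ge> 0"
  shows "attainable_equilibria m g \<rho> I J \<epsilon> =
           {(r, \<alpha>, \<theta>). r > 0 \<and> 0 \<le> \<alpha> \<and> \<alpha> \<le> pi \<and>
              ((0 \<le> \<alpha> \<and> \<alpha> < pi / 2 \<longrightarrow> theta_eps m g \<epsilon> \<alpha> < \<theta> \<and> \<theta> < pi / 2 - \<alpha>) \<and>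
               (\<alpha> = pi / 2 \<longrightarrow> \<theta> = 0) \<and>
               (pi / 2 < \<alpha> \<and> \<alpha> \<le> pi \<longrightarrow> pi / 2 - \<alpha> < \<theta> \<and> \<theta> < theta_eps m g \<epsilon> \<alpha>))}"
    (is "?S = ?R")
proof (rule set_eqI, clarify)
  fix r \<alpha> \<theta> :: real
  have mg: "m * g > 0" using assms by simp
  note membership = attainable_equilibria_iff[OF assms(1,3-5), of r \<alpha> \<theta>]
  consider "\<alpha> < pi / 2" | "\<alpha> = pi / 2" | "pi / 2 < \<alpha>" by linarith
  then show "(r, \<alpha>, \<theta>) \<in> ?S \<longleftrightarrow> (r, \<alpha>, \<theta>) \<in> ?R"
  proof cases
    case 1
    then show ?thesis
      using attainable_pitch_low_elevation[OF assms(1,2), where \<epsilon> = \<epsilon> and \<alpha> = \<alpha> and \<theta> = \<theta>] membership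
      by auto
  next
    case 2
    then show ?thesis
      using attainable_pitch_vertical[OF mg assms(6), where \<theta> = \<theta>] membership unfolding 2 by auto
  next
    case 3
    then show ?thesis
      using attainable_pitch_high_elevation[OF assms(1,2), where \<epsilon> = \<epsilon> and \<alpha> = \<alpha> and \<theta> = \<theta>] membership
      by auto
  qed
qed

lemma eq_tension_off_vertical:
  fixes m g \<rho> I J :: real
  assumes "m > 0" "g > 0" "\<rho> > 0" "I > 0" "J > 0" "r > 0"
    and "\<alpha> \<in> {0..pi}" "\<alpha> \<noteq> pi / 2"
    and "equilibrium_inputs m g \<rho> I J r \<alpha> \<theta> u1 u2 u3"
  shows "eq_tension m g \<alpha> \<theta> u1 = m * g * (tan (\<alpha> + \<theta>) * cos \<alpha> - sin \<alpha>)"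
proof (rule eq_tension_balanced)
  show "m * g \<noteq> 0" using assms by simp
  show "cos \<alpha> \<noteq> 0" using assms cos_inj_pi[of \<alpha> "pi / 2"] by auto
  show "u1 * cos (\<alpha> + \<theta>) = m * g * cos \<alpha>"
    using assms equilibrium_inputs_iff[of m \<rho> I J r] by simp
qed

lemma vertical_equilibrium_tension:
  fixes m g \<rho> I J :: real
  assumes "m > 0" "g > 0" "\<rho> > 0" "I > 0" "J > 0" "r > 0" "T > 0"
  shows "\<exists>u1 u2 u3. equilibrium_inputs m g \<rho> I J r (pi / 2) 0 u1 u2 u3 \<and> eq_tension m g (pi / 2) 0 u1 = T"
  using assms equilibrium_inputs_iff[OF assms(1,3-6)]
  by (auto simp: eq_tension_def intro!: exI[of _ "T + m * g"])

theorem proposition1: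
  fixes m g \<rho> I J \<epsilon> :: real
  assumes "m > 0" and "g > 0" and "\<rho> > 0" and "I > 0" and "J > 0" and "\<epsilon> \<ge> 0"
  shows "attainable_equilibria m g \<rho> I J \<epsilon> =
           {(r, alpha, theta). r > 0 \<and> 0 \<le> alpha \<and> alpha \<le> pi \<and>
              ((0 \<le> alpha \<and> alpha < pi / 2 \<longrightarrow>
                   theta_eps m g \<epsilon> alpha < theta \<and> theta < pi / 2 - alpha) \<and>
               (alpha = pi / 2 \<longrightarrow> theta = 0) \<and>
               (pi / 2 < alpha \<and> alpha \<le> pi \<longrightarrow>
                   pi / 2 - alpha < theta \<and> theta < theta_eps m g \<epsilon> alpha))}
         \<and> (\<forall>r alpha theta u1 u2 u3.
              r > 0 \<and> alpha \<in> {0..pi} \<and> alpha \<noteq> pi / 2 \<and> theta \<in> {-pi<..pi} \<and>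
              equilibrium_inputs m g \<rho> I J r alpha theta u1 u2 u3 \<longrightarrow>
              eq_tension m g alpha theta u1
                = m * g * (tan (alpha + theta) * cos alpha - sin alpha))
         \<and> (\<forall>r T. r > 0 \<and> T > 0 \<longrightarrow>
              (\<exists>u1 u2 u3. equilibrium_inputs m g \<rho> I J r (pi / 2) 0 u1 u2 u3 \<and>
                          eq_tension m g (pi / 2) 0 u1 = T))"
  using attainable_equilibria_eq[OF assms] eq_tension_off_vertical[OF assms(1-5)]
    vertical_equilibrium_tension[OF assms(1-5)]
  by blast

end
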